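(* Let $r_I>r_0>0$, $v_1,v_2>0$, $w_V>0$ and $w_I$ be real numbers with $0<w_I\le \frac{r_0 w_V v_2}{r_I(v_1+v_2)}$. Let $n\ge 1$ be an integer and $l_1,\dots,l_{n-1}\ge 0$ be real numbers. Consider the optimization problem (P) described in the context. Then the optimal value of (P) is $$\left(\sum_{i=1}^{n}Y_i\right)^*=\frac{\sum_{i=1}^{n-1}\min\{l_i,2r_I\}+2r_I}{v_2}\,w_I .$$ Moreover, this optimal value is attained by the feasible point $$Y_i^*=D_i^*=\frac{\min\{l_i,2r_I\}}{v_2}w_I\ (i=1,\dots,n-1),\qquad Y_n^*=D_n^*=\frac{2r_I}{v_2}w_I .$$
   Context: Model: a vehicle of interest (VoI) moving at speed $v_1$ receives data from $n$ "helper" vehicles moving in the opposite direction at speed $v_2$; consecutive helpers are at distances $l_1,\dots,l_{n-1}$; helpers download from an infrastructure point of radio range $r_I$ at rate $w_I$, and deliver to the VoI over vehicle links of range $r_0$ at rate $w_V$. $D_i$ is the amount of data helper $i$ receives from the infrastructure and $Y_i$ the amount it delivers to the VoI. The optimization problem (P), over real variables $D_1,\dots,D_n,Y_1,\dots,Y_n$, is: maximize $\sum_{i=1}^n Y_i$ subject to (i) $0\le D_i\le \frac{2r_I}{v_2}w_I$ for $i=1,\dots,n$; (ii) $\sum_{i=k_1}^{k_2}D_i\le \frac{\sum_{i=k_1}^{k_2-1}\min\{l_i,2r_I\}+2r_I}{v_2}w_I$ for all $1\le k_1\le k_2\le n$; (iii) $0\le Y_i\le \frac{2r_0}{v_1+v_2}w_V$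 for $i=1,\dots,n$; (iv) $Y_i\le D_i$ for $i=1,\dots,n$; (v) $\sum_{i=k_1}^{k_2}Y_i\le \frac{\sum_{i=k_1}^{k_2-1}\min\{l_i,2r_0\}+2r_0}{v_1+v_2}w_V$ for all $1\le k_1\le k_2\le n$. (Empty sums are zero.) *)

theory Defs
  imports Complex_Main
begin

text \<open>Feasible set of problem (P). Helpers and vehicles indexed 1..n;
  D, Y, l are functions on nat, only the values at indices 1..n (resp. 1..n-1) matter.\<close>

definition feasibleP ::
  "real \<Rightarrow> real \<Rightarrow> real \<Rightarrow> real \<Rightarrow> real \<Rightarrow> real \<Rightarrow> nat \<Rightarrow> (nat \<Rightarrow> real)
   \<Rightarrow> (nat \<Rightarrow> real) \<Rightarrow> (nat \<Rightarrow> real) \<Rightarrow> bool" where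
  "feasibleP rI r0 v1 v2 wI wV n l D Y \<longleftrightarrow>
     (\<forall>i\<in>{1..n}. 0 \<le> D i \<and> D i \<le> 2 * rI / v2 * wI) \<and>
     (\<forall>k1 k2. 1 \<le> k1 \<and> k1 \<le> k2 \<and> k2 \<le> n \<longrightarrow>
        (\<Sum>i=k1..k2. D i) \<le> ((\<Sum>i=k1..<k2. min (l i) (2 * rI)) + 2 * rI) / v2 * wI) \<and>
     (\<forall>i\<in>{1..n}. 0 \<le> Y i \<and> Y i \<le> 2 * r0 / (v1 + v2) * wV) \<and>
     (\<forall>i\<in>{1..n}. Y i \<le> D i) \<and>
     (\<forall>k1 k2. 1 \<le> k1 \<and> k1 \<le> k2 \<and> k2 \<le> n \<longrightarrow>
        (\<Sum>i=k1..k2. Y i) \<le> ((\<Sum>i=k1..<k2. min (l i) (2 * r0)) + 2 * r0) / (v1 + v2) * wV)"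

definition objP :: "nat \<Rightarrow> (nat \<Rightarrow> real) \<Rightarrow> real" where
  "objP n Y = (\<Sum>i=1..n. Y i)"

definition optvalP ::
  "real \<Rightarrow> real \<Rightarrow> real \<Rightarrow> real \<Rightarrow> real \<Rightarrow> real \<Rightarrow> nat \<Rightarrow> (nat \<Rightarrow> real) \<Rightarrow> real" where
  "optvalP rI r0 v1 v2 wI wV n l =
     Sup {objP n Y | D Y. feasibleP rI r0 v1 v2 wI wV n l D Y}"

end

theory Submission
  imports Defs
begin

text \<open>Every delivered unit must first be downloaded, so the objective is at most
  \<open>\<Sum> D\<^sub>i\<close>, which constraint (ii) for the full window \<open>1..n\<close> bounds by the claimed
  value. The greedy download schedule attains this bound, and the hypothesis on \<open>w\<^sub>I\<close>
  lets every download be forwarded unchanged (\<open>Y = D\<close>): per unit of road, the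
  infrastructure rate \<open>w\<^sub>I/v\<^sub>2\<close> over range \<open>r\<^sub>I\<close> never exceeds the vehicle
  rate \<open>w\<^sub>V/(v\<^sub>1+v\<^sub>2)\<close> over range \<open>r\<^sub>0\<close>.\<close>

lemma mult_min_le_mult_min:
  fixes x s t a b :: real
  assumes "0 \<le> x" "0 < s" "s \<le> t" "0 \<le> a" "a * t \<le> b * s"
  shows "a * min x t \<le> b * min x s"
proof (cases "x \<le> s")
  case True
  have "a * s \<le> b * s"
    using assms mult_left_mono[of s t a] by linarith
  then have "a \<le> b" using assms(2) by simp
  then show ?thesis using True assms(1,3) by (simp add: mult_right_mono)
next
  case False
  have "a * min x t \<le> a * t" using assms by (simp add: mult_left_mono)
  then show ?thesis using False assms by simp
qed

lemma sum_atLeastAtMost_le_window: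
  fixes f g :: "nat \<Rightarrow> real"
  assumes "k1 \<le> k2" "\<And>i. k1 \<le> i \<Longrightarrow> i < k2 \<Longrightarrow> f i \<le> g i" "f k2 \<le> b"
  shows "(\<Sum>i=k1..k2. f i) \<le> (\<Sum>i=k1..<k2. g i) + b"
proof -
  have "(\<Sum>i=k1..k2. f i) = (\<Sum>i=k1..<k2. f i) + f k2"
    using assms(1) by (metis atLeastLessThanSuc_atLeastAtMost sum.atLeastLessThan_Suc)
  also have "\<dots> \<le> (\<Sum>i=k1..<k2. g i) + b"
    using assms by (intro add_mono sum_mono) auto
  finally show ?thesis .
qed

lemma sum_plus_divide_mult:
  fixes g :: "nat \<Rightarrow> real"
  shows "((\<Sum>i\<in>A. g i) + b) / v * w = (\<Sum>i\<in>A. g i * (w / v)) + b * (w / v)"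
proof -
  have "((\<Sum>i\<in>A. g i) + b) / v * w = ((\<Sum>i\<in>A. g i) + b) * (w / v)" by simp
  then show ?thesis by (simp only: distrib_right sum_distrib_right)
qed

lemma objP_le_full_window:
  assumes "feasibleP rI r0 v1 v2 wI wV n l D Y" "n \<ge> 1"
  shows "objP n Y \<le> ((\<Sum>i=1..<n. min (l i) (2 * rI)) + 2 * rI) / v2 * wI"
proof -
  have "objP n Y \<le> (\<Sum>i=1..n. D i)"
    using assms(1) unfolding objP_def feasibleP_def by (intro sum_mono) auto
  also have "\<dots> \<le> ((\<Sum>i=1..<n. min (l i) (2 * rI)) + 2 * rI) / v2 * wI"
    using assms unfolding feasibleP_def by auto
  finally show ?thesis .
qed

definition greedy_download :: "real \<Rightarrow> real \<Rightarrow> real \<Rightarrow> nat \<Rightarrow> (nat \<Rightarrow> real) \<Rightarrow> nat \<Rightarrow> real" where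
  "greedy_download rI v2 wI n l =
     (\<lambda>i. if i = n then 2 * rI / v2 * wI else min (l i) (2 * rI) / v2 * wI)"

lemma objP_greedy_download:
  assumes "n \<ge> 1"
  shows "objP n (greedy_download rI v2 wI n l) = ((\<Sum>i=1..<n. min (l i) (2 * rI)) + 2 * rI) / v2 * wI"
proof -
  let ?D = "greedy_download rI v2 wI n l"
  have "{1..n} = insert n {1..<n}" using assms by auto
  then have "objP n ?D = ?D n + (\<Sum>i=1..<n. ?D i)" unfolding objP_def by simp
  also have "(\<Sum>i=1..<n. ?D i) = (\<Sum>i=1..<n. min (l i) (2 * rI) * (wI / v2))"
    by (intro sum.cong) (auto simp: greedy_download_def)
  also have "?D n = 2 * rI * (wI / v2)" by (simp add: greedy_download_def)
  finally show ?thesis unfolding sum_plus_divide_mult by linarith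
qed

lemma feasibleP_greedy_download:
  assumes "0 < r0" "r0 \<le> rI" "0 \<le> wI / v2" "wI / v2 * rI \<le> wV / (v1 + v2) * r0"
    and "\<forall>i\<in>{1..<n}. 0 \<le> l i"
  shows "feasibleP rI r0 v1 v2 wI wV n l (greedy_download rI v2 wI n l) (greedy_download rI v2 wI n l)"
proof -
  define c where "c = wI / v2"
  define W where "W = wV / (v1 + v2)"
  let ?D = "greedy_download rI v2 wI n l"
  have c_nonneg: "0 \<le> c" using assms(3) unfolding c_def .
  have "c * rI \<le> W * r0" using assms(4) unfolding c_def W_def .
  then have c_W: "c * (2 * rI) \<le> W * (2 * r0)" by linarith
  have D_eq: "?D i = min (l i) (2 * rI) * c" if "i \<noteq> n" for i
    using that unfolding greedy_download_def c_def by simp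
  have D_le_I: "?D i \<le> 2 * rI * c" for i
  proof (cases "i = n")
    case False
    have "min (l i) (2 * rI) * c \<le> 2 * rI * c"
      using c_nonneg by (intro mult_right_mono) auto
    then show ?thesis using D_eq False by simp
  qed (simp add: greedy_download_def c_def)
  have D_le_V: "?D i \<le> 2 * r0 * W" for i
    using D_le_I[of i] c_W by (simp add: mult.commute)
  have D_nonneg: "0 \<le> ?D i" if "1 \<le> i" "i \<le> n" for i
  proof (cases "i = n")
    case True
    then have "?D i = 2 * rI * c" by (simp add: greedy_download_def c_def)
    then show ?thesis using assms(1,2) c_nonneg by simp
  next
    case False
    then have "0 \<le> min (l i) (2 * rI)" using that assms(1,2,5) by auto
    then show ?thesis using D_eq False c_nonneg by simp
  qed
  have forwardable: "min (l i) (2 * rI) * c \<le> min (l i) (2 * r0) * W" if "1 \<le> i" "i < n" for i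
    using mult_min_le_mult_min[of "l i" "2 * r0" "2 * rI" c W] that assms c_W
    unfolding c_def by (simp add: mult.commute)
  have window_I: "(\<Sum>i=k1..k2. ?D i) \<le> ((\<Sum>i=k1..<k2. min (l i) (2 * rI)) + 2 * rI) / v2 * wI"
    if "k1 \<le> k2" "k2 \<le> n" for k1 k2
    unfolding sum_plus_divide_mult c_def[symmetric]
    using that by (intro sum_atLeastAtMost_le_window) (auto simp: D_eq D_le_I)
  have window_V: "(\<Sum>i=k1..k2. ?D i) \<le> ((\<Sum>i=k1..<k2. min (l i) (2 * r0)) + 2 * r0) / (v1 + v2) * wV"
    if "1 \<le> k1" "k1 \<le> k2" "k2 \<le> n" for k1 k2
    unfolding sum_plus_divide_mult W_def[symmetric]
    using that by (intro sum_atLeastAtMost_le_window) (auto simp: D_eq D_le_V forwardable)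
  show ?thesis
    unfolding feasibleP_def
    using D_nonneg D_le_I D_le_V window_I window_V unfolding c_def W_def by auto
qed

theorem theorem1:
  fixes rI r0 v1 v2 wI wV :: real and n :: nat and l :: "nat \<Rightarrow> real"
  assumes "rI > r0" and "r0 > 0" and "v1 > 0" and "v2 > 0" and "wV > 0"
    and "0 < wI" and "wI \<le> r0 * wV * v2 / (rI * (v1 + v2))"
    and "n \<ge> 1"
    and "\<forall>i\<in>{1..n-1}. l i \<ge> 0"
  defines "Dstar \<equiv> (\<lambda>i. if i = n then 2 * rI / v2 * wI else min (l i) (2 * rI) / v2 * wI)"
  shows "optvalP rI r0 v1 v2 wI wV n l = ((\<Sum>i=1..n-1. min (l i) (2 * rI)) + 2 * rI) / v2 * wI
         \<and> (\<forall>D Y. feasibleP rI r0 v1 v2 wI wV n l D Y \<longrightarrow> objP n Y \<le> optvalP rI r0 v1 v2 wI wV n l)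
         \<and> feasibleP rI r0 v1 v2 wI wV n l Dstar Dstar
         \<and> objP n Dstar = optvalP rI r0 v1 v2 wI wV n l"
proof -
  define B where "B = ((\<Sum>i=1..<n. min (l i) (2 * rI)) + 2 * rI) / v2 * wI"
  have Dstar: "Dstar = greedy_download rI v2 wI n l"
    unfolding Dstar_def greedy_download_def ..
  have "wI * (rI * (v1 + v2)) \<le> r0 * wV * v2"
    using assms(1-4,7) by (simp add: pos_le_divide_eq)
  then have rate: "wI / v2 * rI \<le> wV / (v1 + v2) * r0"
    using assms(3,4) by (simp add: field_simps)
  have feasible: "feasibleP rI r0 v1 v2 wI wV n l Dstar Dstar"
    unfolding Dstar using assms rate
    by (intro feasibleP_greedy_download) (auto simp: atLeastLessThan_eq_atLeastAtMost_diff)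
  have attained: "objP n Dstar = B"
    unfolding Dstar B_def using assms(8) by (rule objP_greedy_download)
  have optval: "optvalP rI r0 v1 v2 wI wV n l = B"
    unfolding optvalP_def
  proof (rule cSup_eq_maximum)
    show "B \<in> {objP n Y |D Y. feasibleP rI r0 v1 v2 wI wV n l D Y}"
      using feasible attained by blast
  qed (use objP_le_full_window assms(8) B_def in blast)
  have "{1..n-1} = {1..<n}" using assms(8) by auto
  then show ?thesis
    using optval feasible attained objP_le_full_window assms(8) unfolding B_def by auto
qed

end
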